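(* Let $k\ge 2$, let $\lambda_1,\ldots,\lambda_k$ be nonzero integers with $\gcd(\lambda_1,\ldots,\lambda_k)=1$, and $g_i=\gcd(\lambda_j:j\ne i)$. Let $A\subset\mathbb{Z}$ be a finite reduced set. For each $1\le i\le k$ write $A$ as the disjoint union $A=\bigcup_{j=1}^{m_i}A_{ij}$ of its nonempty intersections with residue classes mod $g_i$, where $A_{ij}=a_{ij}+g_i\cdot A'_{ij}$ with $0\le a_{ij}<g_i$ and $A'_{ij}\subset\mathbb{Z}$. Fix $1\le i\le k$ and $1\le j\le m_i$. Then either $A'_{ij}$ is fully distributed mod $g_i$, or $$\big|\lambda_1\cdot A+\cdots+\lambda_{i-1}\cdot A+\lambda_i\cdot A_{ij}+\lambda_{i+1}\cdot A+\cdots+\lambda_k\cdot A\big|\ \ge\ |\lambda_1\cdot A_{ij}+\cdots+\lambda_k\cdot A_{ij}|+\min_{1\le w\le m_i}|A_{iw}|.$$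
   Context: For an integer $d$ and a finite set $A$, $d\cdot A=\{da:a\in A\}$, $x+A=\{x+a:a\in A\}$; sums of sets are Minkowski sums. A set $A\subset\mathbb{Z}$ is fully distributed (FD) mod $q$ if it intersects every residue class mod $q$. A finite set $A\subset\mathbb{Z}$ is reduced if it is not contained in any proper infinite arithmetic progression, i.e. there is no $a\in\mathbb{Z}$ and integer $d\ge 2$ with $A\subset a+d\mathbb{Z}$ (equivalently, $|A|\ge2$ and the differences of elements of $A$ have gcd 1). *)

theory Defs
  imports "HOL-Number_Theory.Number_Theory"
begin

definition dilate :: "int \<Rightarrow> int set \<Rightarrow> int set" where
  "dilate d A = (\<lambda>a. d * a) ` A"

definition sumset :: "int set \<Rightarrow> int set \<Rightarrow> int set" where
  "sumset A B = {a + b | a b. a \<in> A \<and> b \<in> B}"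

fun msum :: "nat \<Rightarrow> (nat \<Rightarrow> int set) \<Rightarrow> int set" where
  "msum 0 S = {0}"
| "msum (Suc n) S = sumset (msum n S) (S (Suc n))"

definition fully_distributed :: "int set \<Rightarrow> int \<Rightarrow> bool" where
  "fully_distributed A q \<longleftrightarrow> (\<forall>r. \<exists>a\<in>A. [a = r] (mod q))"

definition reduced :: "int set \<Rightarrow> bool" where
  "reduced A \<longleftrightarrow> \<not> (\<exists>a d. d \<ge> 2 \<and> A \<subseteq> {x. [x = a] (mod d)})"

end

theory Submission
  imports Defs
begin

(*
  Notation: n = g_i = gcd of the lam_l with l <> i, B = {x in A. x mod n = r} the chosen
  class of A, S = lam_1 A + ... + lam_i B + ... + lam_k A ("mixed sum") and
  T = lam_1 B + ... + lam_k B ("slice sum"); clearly T is a subset of S.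

  The proof distinguishes whether every element of S is congruent modulo n^2 to some
  element of T.

  * If so, the set P = {w. w = lam_i * b' (mod n) for some b' in B'}, B' = (B - r)/n, is
    invariant under adding each step (lam_l / n) * (a - b0) with l <> i, a in A, b0 in B:
    comparing a suitable element of S with an element of T congruent to it mod n^2 and
    dividing by n shows this.  Since A is reduced these steps have no common divisor
    except units, so P is all of Z (a subgroup argument), and as lam_i is coprime to n,
    B' meets every residue class mod n.
  * If not, pick x in S with no element of T congruent to it mod n^2 and move one summand
    lam_l0 * a_l0 (l0 <> i) within the residue class of a_l0 mod n.  This moves x by
    multiples of n^2, so it produces |C| >= min_w |A_iw| distinct elements of S - T.
*)

lemma msum_mem:
  "x \<in> msum n S \<longleftrightarrow> (\<exists>c. (\<forall>l\<in>{1..n}. c l \<in> S l) \<and> x = (\<Sum>l=1..n. c l))"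
proof (induction n arbitrary: x)
  case 0
  then show ?case by auto
next
  case (Suc n)
  show ?case
  proof
    assume "x \<in> msum (Suc n) S"
    then obtain y z where y: "y \<in> msum n S" and z: "z \<in> S (Suc n)" and x: "x = y + z"
      by (auto simp: sumset_def)
    from y Suc obtain c where c: "\<forall>l\<in>{1..n}. c l \<in> S l" "y = (\<Sum>l=1..n. c l)" by blast
    let ?c = "c(Suc n := z)"
    have "(\<Sum>l=1..n. ?c l) = (\<Sum>l=1..n. c l)" by (rule sum.cong) auto
    hence "x = (\<Sum>l=1..Suc n. ?c l)" using x c by simp
    moreover have "\<forall>l\<in>{1..Suc n}. ?c l \<in> S l" using c z by auto
    ultimately show "\<exists>c. (\<forall>l\<in>{1..Suc n}. c l \<in> S l) \<and> x = (\<Sum>l=1..Suc n. c l)" by blast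
  next
    assume "\<exists>c. (\<forall>l\<in>{1..Suc n}. c l \<in> S l) \<and> x = (\<Sum>l=1..Suc n. c l)"
    then obtain c where c: "\<forall>l\<in>{1..Suc n}. c l \<in> S l" "x = (\<Sum>l=1..Suc n. c l)" by blast
    have "\<forall>l\<in>{1..n}. c l \<in> S l" using c by auto
    hence "(\<Sum>l=1..n. c l) \<in> msum n S" using Suc.IH by blast
    moreover have "c (Suc n) \<in> S (Suc n)" using c by auto
    moreover have "x = (\<Sum>l=1..n. c l) + c (Suc n)" using c by simp
    ultimately show "x \<in> msum (Suc n) S" by (auto simp: sumset_def)
  qed
qed

lemma msum_dilate_mem:
  "x \<in> msum n (\<lambda>l. dilate (lam l) (X l)) \<longleftrightarrow>
     (\<exists>a. (\<forall>l\<in>{1..n}. a l \<in> X l) \<and> x = (\<Sum>l=1..n. lam l * a l))"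
proof
  assume "x \<in> msum n (\<lambda>l. dilate (lam l) (X l))"
  then obtain c where c: "\<forall>l\<in>{1..n}. c l \<in> dilate (lam l) (X l)" "x = (\<Sum>l=1..n. c l)"
    unfolding msum_mem by blast
  hence "\<forall>l\<in>{1..n}. \<exists>y. y \<in> X l \<and> c l = lam l * y" by (auto simp: dilate_def)
  then obtain a where a: "\<forall>l\<in>{1..n}. a l \<in> X l \<and> c l = lam l * a l" by metis
  have "x = (\<Sum>l=1..n. lam l * a l)" using c(2) a by (auto intro: sum.cong)
  thus "\<exists>a. (\<forall>l\<in>{1..n}. a l \<in> X l) \<and> x = (\<Sum>l=1..n. lam l * a l)" using a by blast
next
  assume "\<exists>a. (\<forall>l\<in>{1..n}. a l \<in> X l) \<and> x = (\<Sum>l=1..n. lam l * a l)"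
  then obtain a where a: "\<forall>l\<in>{1..n}. a l \<in> X l" "x = (\<Sum>l=1..n. lam l * a l)" by blast
  show "x \<in> msum n (\<lambda>l. dilate (lam l) (X l))" unfolding msum_mem
    by (rule exI[of _ "\<lambda>l. lam l * a l"]) (use a in \<open>auto simp: dilate_def\<close>)
qed

lemma msum_finite: "(\<forall>l\<in>{1..n}. finite (S l)) \<Longrightarrow> finite (msum n S)"
proof (induction n)
  case 0 then show ?case by simp
next
  case (Suc n)
  have "sumset (msum n S) (S (Suc n)) = (\<lambda>(a,b). a+b) ` (msum n S \<times> S (Suc n))"
    by (auto simp: sumset_def)
  then show ?case using Suc by auto
qed

lemma msum_dilate_mono:
  "(\<And>l. l \<in> {1..n} \<Longrightarrow> X l \<subseteq> Y l) \<Longrightarrow>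
     msum n (\<lambda>l. dilate (lam l) (X l)) \<subseteq> msum n (\<lambda>l. dilate (lam l) (Y l))"
  unfolding msum_dilate_mem subset_iff by blast

lemma sum_update_slot:
  fixes lam a :: "nat \<Rightarrow> int"
  assumes "finite K" "l0 \<in> K"
  shows "(\<Sum>l\<in>K. lam l * (a(l0 := y)) l) = (\<Sum>l\<in>K. lam l * a l) + lam l0 * (y - a l0)"
proof -
  have "(\<Sum>l\<in>K. lam l * (a(l0 := y)) l) = lam l0 * y + (\<Sum>l\<in>K - {l0}. lam l * a l)"
    using assms by (simp add: sum.remove)
  moreover have "(\<Sum>l\<in>K. lam l * a l) = lam l0 * a l0 + (\<Sum>l\<in>K - {l0}. lam l * a l)"
    using assms by (simp add: sum.remove)
  ultimately show ?thesis by (simp add: algebra_simps)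
qed

lemma sum_cong_mod_square:
  fixes lam c c' :: "nat \<Rightarrow> int"
  assumes "finite K" "i \<in> K"
    and "\<And>l. l \<in> K - {i} \<Longrightarrow> n dvd lam l \<and> n dvd c l - c' l"
  shows "[(\<Sum>l\<in>K. lam l * c l) = (\<Sum>l\<in>K. lam l * c' l) + lam i * (c i - c' i)] (mod n * n)"
proof -
  have "(\<Sum>l\<in>K. lam l * c l) - (\<Sum>l\<in>K. lam l * c' l) = (\<Sum>l\<in>K. lam l * (c l - c' l))"
    by (simp add: sum_subtractf[symmetric] algebra_simps)
  also have "\<dots> = lam i * (c i - c' i) + (\<Sum>l\<in>K - {i}. lam l * (c l - c' l))"
    using assms(1,2) by (simp add: sum.remove)
  finally have diff: "(\<Sum>l\<in>K. lam l * c l) - ((\<Sum>l\<in>K. lam l * c' l) + lam i * (c i - c' i))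
      = (\<Sum>l\<in>K - {i}. lam l * (c l - c' l))" by simp
  have "n * n dvd (\<Sum>l\<in>K - {i}. lam l * (c l - c' l))"
    using assms(3) by (intro dvd_sum) (simp add: mult_dvd_mono)
  then show ?thesis by (simp add: cong_iff_dvd_diff diff)
qed

lemma card_add_le_of_injection:
  assumes "finite S" "T \<subseteq> S" "finite C" "inj_on f C" "f ` C \<subseteq> S - T"
  shows "card T + card C \<le> card S"
proof -
  have "card T + card C = card (T \<union> f ` C)"
    using assms finite_subset[OF \<open>T \<subseteq> S\<close>] by (subst card_Un_disjoint) (auto simp: card_image)
  also have "\<dots> \<le> card S" using assms by (intro card_mono) auto
  finally show ?thesis .
qed

context
  fixes D :: "int set" and n :: int
  assumes period_pos: "n > 0"
    and period: "\<And>m. n * m \<in> D"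
    and add_closed: "\<And>x y. x \<in> D \<Longrightarrow> y \<in> D \<Longrightarrow> x + y \<in> D"
begin

lemma multiples_closed:
  assumes e: "e \<in> D" shows "m * e \<in> D"
proof -
  have nat_mult: "int j * x \<in> D" if x: "x \<in> D" for j x
  proof (induction j)
    case 0 show ?case using period[of 0] by simp
  next
    case (Suc j) then show ?case using add_closed[OF Suc x] by (simp add: algebra_simps)
  qed
  have neg: "- e \<in> D"
  proof -
    have "int (nat (n - 1)) * e + n * (- e) \<in> D" by (rule add_closed[OF nat_mult[OF e] period])
    also have "int (nat (n - 1)) * e + n * (- e) = - e" using period_pos by (simp add: algebra_simps)
    finally show ?thesis .
  qed
  show ?thesis
  proof (cases "m \<ge> 0")
    case True then show ?thesis using nat_mult[OF e, of "nat m"] by simp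
  next
    case False then show ?thesis using nat_mult[OF neg, of "nat (- m)"] by simp
  qed
qed

lemma gcd_closed:
  assumes "x \<in> D" "y \<in> D" shows "gcd x y \<in> D"
proof -
  obtain u v where uv: "u * x + v * y = gcd x y" using bezout_int by blast
  have "u * x + v * y \<in> D"
    using add_closed[OF multiples_closed[OF assms(1)] multiples_closed[OF assms(2)]] .
  then show ?thesis by (simp only: uv)
qed

lemma Gcd_closed:
  assumes "finite E" "E \<subseteq> D" shows "Gcd E \<in> D"
  using assms
proof (induction E rule: finite_induct)
  case empty show ?case using period[of 0] by simp
next
  case (insert e E) then show ?case by (simp add: gcd_closed)
qed

end

text \<open>A nonempty set of integers invariant under translation by n\<int> and by a finite set of
  steps without nontrivial common divisor is all of \<int>: its translation group contains the
  gcd of the steps, which is 1.\<close>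
lemma translation_invariant_set_is_UNIV:
  fixes P E :: "int set" and n :: int
  assumes "n > 0" and "P \<noteq> {}"
    and period: "\<And>w m. w \<in> P \<Longrightarrow> w + n * m \<in> P"
    and step: "\<And>w e. w \<in> P \<Longrightarrow> e \<in> E \<Longrightarrow> w + e \<in> P"
    and "finite E" and coprime_steps: "\<And>d. (\<forall>e\<in>E. d dvd e) \<Longrightarrow> is_unit d"
  shows "P = UNIV"
proof -
  define D where "D = {e. \<forall>w\<in>P. w + e \<in> P}"
  have D_period: "n * m \<in> D" for m using period unfolding D_def by blast
  have D_add: "x + y \<in> D" if "x \<in> D" "y \<in> D" for x y
    using that unfolding D_def by (simp add: add.assoc[symmetric])
  have "E \<subseteq> D" using step unfolding D_def by blast
  then have "Gcd E \<in> D"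
    using Gcd_closed[of n D E] \<open>n > 0\<close> D_period D_add \<open>finite E\<close> by blast
  moreover have "Gcd E = 1" using coprime_steps[of "Gcd E"] by simp
  ultimately have "1 \<in> D" by simp
  then have one: "m * 1 \<in> D" for m
    using multiples_closed[of n D 1] \<open>n > 0\<close> D_period D_add by blast
  obtain w0 where "w0 \<in> P" using \<open>P \<noteq> {}\<close> by blast
  have "w0 + (z - w0) * 1 \<in> P" for z using one[of "z - w0"] \<open>w0 \<in> P\<close> unfolding D_def by blast
  then show ?thesis by auto
qed

lemma coprime_Gcd_others:
  fixes lam :: "nat \<Rightarrow> int"
  assumes "Gcd (lam ` K) = 1" "i \<in> K"
  shows "coprime (lam i) (Gcd (lam ` (K - {i})))"
proof (rule coprimeI)
  fix c assume c_lam: "c dvd lam i" and c_Gcd: "c dvd Gcd (lam ` (K - {i}))"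
  have "c dvd lam l" if "l \<in> K" for l
  proof (cases "l = i")
    case True then show ?thesis using c_lam by simp
  next
    case False
    with that have "Gcd (lam ` (K - {i})) dvd lam l" by (intro Gcd_dvd) auto
    with c_Gcd show ?thesis by (rule dvd_trans)
  qed
  then have "c dvd Gcd (lam ` K)" by (intro Gcd_greatest) auto
  then show "is_unit c" using assms(1) by simp
qed

lemma reduced_common_divisor:
  fixes lam :: "nat \<Rightarrow> int"
  assumes "reduced A" "b0 \<in> A" and n: "n = Gcd (lam ` L)" "n \<noteq> 0"
    and d_dvd: "\<And>l a. l \<in> L \<Longrightarrow> a \<in> A \<Longrightarrow> d dvd (lam l div n) * (a - b0)"
  shows "is_unit d"
proof -
  have d_dvd_diff: "d dvd a - b0" if a: "a \<in> A" for a
  proof -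
    have "d * n dvd lam l * (a - b0)" if l: "l \<in> L" for l
    proof -
      have "n dvd lam l" using n l by auto
      hence "lam l * (a - b0) = n * ((lam l div n) * (a - b0))" by simp
      moreover have "n * d dvd n * ((lam l div n) * (a - b0))"
        using mult_dvd_mono[OF dvd_refl d_dvd[OF l a]] .
      ultimately show ?thesis by (metis mult.commute)
    qed
    hence "d * n dvd Gcd ((*) (a - b0) ` (lam ` L))"
      by (intro Gcd_greatest) (auto simp: mult.commute)
    also have "Gcd ((*) (a - b0) ` (lam ` L)) = normalize ((a - b0) * n)"
      using n by (simp add: Gcd_mult)
    finally have "d * n dvd (a - b0) * n" by simp
    thus ?thesis using n(2) by simp
  qed
  show ?thesis
  proof (rule ccontr)
    assume "\<not> is_unit d"
    obtain m :: int where "m \<ge> 2" "m dvd d"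
    proof (cases "d = 0")
      case True then show ?thesis using that[of 2] by simp
    next
      case False
      with \<open>\<not> is_unit d\<close> have "\<bar>d\<bar> \<ge> 2" by auto
      then show ?thesis using that[of "\<bar>d\<bar>"] by simp
    qed
    moreover have "A \<subseteq> {x. [x = b0] (mod m)}"
      using d_dvd_diff dvd_trans[OF \<open>m dvd d\<close>] by (auto simp: cong_iff_dvd_diff)
    ultimately show False using \<open>reduced A\<close> unfolding reduced_def by blast
  qed
qed

definition covered_mod :: "int set \<Rightarrow> int set \<Rightarrow> int \<Rightarrow> bool" where
  "covered_mod S T q \<longleftrightarrow> (\<forall>x\<in>S. \<exists>t\<in>T. [x = t] (mod q))"

context
  fixes k :: nat and lam :: "nat \<Rightarrow> int" and A :: "int set" and i :: nat and n r :: int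
  assumes i_range: "i \<in> {1..k}"
    and n_Gcd: "n = Gcd (lam ` ({1..k} - {i}))"
    and n_pos: "n > 0"
    and A_finite: "finite A"
begin

abbreviation slice :: "int set" where
  "slice \<equiv> {x \<in> A. x mod n = r}"

abbreviation mixed_sum :: "int set" where
  "mixed_sum \<equiv> msum k (\<lambda>l. dilate (lam l) (if l = i then slice else A))"

abbreviation slice_sum :: "int set" where
  "slice_sum \<equiv> msum k (\<lambda>l. dilate (lam l) slice)"

lemma n_dvd_lam: "l \<in> {1..k} - {i} \<Longrightarrow> n dvd lam l"
  using n_Gcd by auto

lemma slice_decomp:
  assumes "b \<in> slice" shows "b = r + n * ((b - r) div n)"
proof -
  have "b - r = n * (b div n)" using assms div_mult_mod_eq[of b n] by (simp add: algebra_simps)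
  then show ?thesis using n_pos by simp
qed

lemma slice_dvd: "b \<in> slice \<Longrightarrow> b' \<in> slice \<Longrightarrow> n dvd b - b'"
  by (simp add: mod_eq_dvd_iff[symmetric])

lemma slice_sum_subset: "slice_sum \<subseteq> mixed_sum"
  by (rule msum_dilate_mono) auto

lemma mixed_sum_finite: "finite mixed_sum"
  using A_finite by (intro msum_finite) (auto simp: dilate_def)

lemma translation_step:
  assumes covered: "covered_mod mixed_sum slice_sum (n * n)"
    and b: "b \<in> slice" and b0: "b0 \<in> slice" and l: "l \<in> {1..k} - {i}" and a: "a \<in> A"
  obtains b' where "b' \<in> slice"
    and "n dvd (lam l div n) * (a - b0) + lam i * ((b - r) div n - (b' - r) div n)"
proof -
  define c where "c = (\<lambda>l'. if l' = i then b else b0)"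
  define x where "x = (\<Sum>l'=1..k. lam l' * (c(l := a)) l')"
  have x_eq: "x = (\<Sum>l'=1..k. lam l' * c l') + lam l * (a - b0)"
    unfolding x_def using sum_update_slot[of "{1..k}" l lam c a] l by (simp add: c_def)
  have "x \<in> mixed_sum"
    unfolding x_def msum_dilate_mem using a b b0 l by (intro exI[of _ "c(l := a)"]) (auto simp: c_def)
  then obtain t where t: "t \<in> slice_sum" and xt: "[x = t] (mod n * n)"
    using covered unfolding covered_mod_def by blast
  then obtain c' where c': "\<forall>l'\<in>{1..k}. c' l' \<in> slice" and t_eq: "t = (\<Sum>l'=1..k. lam l' * c' l')"
    unfolding msum_dilate_mem by blast
  have "[(\<Sum>l'=1..k. lam l' * c l') = t + lam i * (b - c' i)] (mod n * n)"
    unfolding t_eq using sum_cong_mod_square[of "{1..k}" i n lam c c'] i_range c' b0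
    by (auto simp: c_def n_dvd_lam slice_dvd)
  then have "[x = t + lam i * (b - c' i) + lam l * (a - b0)] (mod n * n)"
    unfolding x_eq by (rule cong_add[OF _ cong_refl])
  with xt have "[t + lam i * (b - c' i) + lam l * (a - b0) = t] (mod n * n)"
    using cong_sym cong_trans by blast
  then have sq_dvd: "n * n dvd lam l * (a - b0) + lam i * (b - c' i)"
    by (simp add: cong_iff_dvd_diff algebra_simps)
  have c'_i: "c' i \<in> slice" using c' i_range by blast
  define \<beta> \<beta>' where "\<beta> = (b - r) div n" and "\<beta>' = (c' i - r) div n"
  have "lam l = n * (lam l div n)" using n_dvd_lam[OF l] by simp
  moreover have "b = r + n * \<beta>" "c' i = r + n * \<beta>'"
    unfolding \<beta>_def \<beta>'_def using slice_decomp[OF b] slice_decomp[OF c'_i] by simp_all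
  ultimately have "lam l * (a - b0) + lam i * (b - c' i) = n * ((lam l div n) * (a - b0) + lam i * (\<beta> - \<beta>'))"
    by (simp add: algebra_simps)
  with sq_dvd n_pos have "n dvd (lam l div n) * (a - b0) + lam i * (\<beta> - \<beta>')"
    by simp
  with c'_i show ?thesis unfolding \<beta>_def \<beta>'_def by (rule that)
qed

lemma fully_distributed_if_covered:
  assumes covered: "covered_mod mixed_sum slice_sum (n * n)"
    and "reduced A" and coprime: "coprime (lam i) n" and "slice \<noteq> {}"
  shows "fully_distributed ((\<lambda>x. (x - r) div n) ` slice) n"
proof -
  obtain b0 where b0: "b0 \<in> slice" using \<open>slice \<noteq> {}\<close> by blast
  define P where "P = {w. \<exists>b\<in>slice. [w = lam i * ((b - r) div n)] (mod n)}"
  define E where "E = {(lam l div n) * (a - b0) | l a. l \<in> {1..k} - {i} \<and> a \<in> A}"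
  have "P = UNIV"
  proof (rule translation_invariant_set_is_UNIV[OF n_pos])
    show "P \<noteq> {}" using b0 cong_refl unfolding P_def by blast
    show "w + n * m \<in> P" if "w \<in> P" for w m
    proof -
      obtain b where "b \<in> slice" and "[w = lam i * ((b - r) div n)] (mod n)"
        using \<open>w \<in> P\<close> unfolding P_def by blast
      moreover have "[w + n * m = w] (mod n)" by (simp add: cong_iff_dvd_diff)
      ultimately show ?thesis unfolding P_def using cong_trans by blast
    qed
    show "w + e \<in> P" if w: "w \<in> P" and e: "e \<in> E" for w e
    proof -
      obtain b where b: "b \<in> slice" and wb: "[w = lam i * ((b - r) div n)] (mod n)"
        using w unfolding P_def by blast
      obtain l a where l: "l \<in> {1..k} - {i}" and a: "a \<in> A" and e_eq: "e = (lam l div n) * (a - b0)"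
        using e unfolding E_def by blast
      obtain b' where b': "b' \<in> slice"
        and "n dvd (lam l div n) * (a - b0) + lam i * ((b - r) div n - (b' - r) div n)"
        using translation_step[OF covered b b0 l a] by blast
      then have "[lam i * ((b - r) div n) + e = lam i * ((b' - r) div n)] (mod n)"
        unfolding e_eq by (simp add: cong_iff_dvd_diff algebra_simps)
      moreover have "[w + e = lam i * ((b - r) div n) + e] (mod n)"
        using wb by (rule cong_add[OF _ cong_refl])
      ultimately have "[w + e = lam i * ((b' - r) div n)] (mod n)"
        using cong_trans by blast
      with b' show ?thesis unfolding P_def by blast
    qed
    show "finite E" unfolding E_def using A_finite by (intro finite_image_set2) simp_all
    show "is_unit d" if d: "\<forall>e\<in>E. d dvd e" for d
    proof (rule reduced_common_divisor[OF \<open>reduced A\<close> _ n_Gcd])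
      show "b0 \<in> A" using b0 by simp
      show "n \<noteq> 0" using n_pos by simp
      show "d dvd (lam l div n) * (a - b0)" if "l \<in> {1..k} - {i}" "a \<in> A" for l a
        using d that unfolding E_def by blast
    qed
  qed
  show ?thesis unfolding fully_distributed_def
  proof
    fix z
    have "lam i * z \<in> P" using \<open>P = UNIV\<close> by simp
    then obtain b where b: "b \<in> slice" and "[lam i * z = lam i * ((b - r) div n)] (mod n)"
      unfolding P_def by blast
    then have "[(b - r) div n = z] (mod n)"
      using cong_mult_lcancel[OF coprime] cong_sym by blast
    with b show "\<exists>y\<in>(\<lambda>x. (x - r) div n) ` slice. [y = z] (mod n)" by blast
  qed
qed

text \<open>Second alternative: an element of the mixed sum not covered modulo n^2 can be moved
  within the mixed sum, off the slice sum, along a whole residue class of A mod n.\<close>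
lemma card_gain_if_not_covered:
  assumes not_covered: "\<not> covered_mod mixed_sum slice_sum (n * n)"
    and "k \<ge> 2" and lam_nonzero: "\<forall>l\<in>{1..k}. lam l \<noteq> 0"
  shows "card slice_sum + Min {card {x \<in> A. x mod n = s} | s. 0 \<le> s \<and> s < n \<and> {x \<in> A. x mod n = s} \<noteq> {}}
      \<le> card mixed_sum"
proof -
  obtain x where "x \<in> mixed_sum" and x_off: "\<forall>t\<in>slice_sum. \<not> [x = t] (mod n * n)"
    using not_covered unfolding covered_mod_def by blast
  then obtain a where a: "\<forall>l\<in>{1..k}. a l \<in> (if l = i then slice else A)"
    and x_eq: "x = (\<Sum>l=1..k. lam l * a l)"
    unfolding msum_dilate_mem by blast
  obtain l0 where l0: "l0 \<in> {1..k}" "l0 \<noteq> i"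
  proof -
    have "(if i = 1 then 2 else 1) \<in> {1..k} - {i}" using \<open>k \<ge> 2\<close> i_range by auto
    then show ?thesis using that by blast
  qed
  have "a l0 \<in> (if l0 = i then slice else A)" using a l0(1) by blast
  then have a_l0: "a l0 \<in> A" using l0(2) by simp
  define C where "C = {y \<in> A. y mod n = a l0 mod n}"
  define f where "f y = x + lam l0 * (y - a l0)" for y
  have f_new: "f y \<in> mixed_sum - slice_sum" if y: "y \<in> C" for y
  proof
    have "f y = (\<Sum>l=1..k. lam l * (a(l0 := y)) l)"
      unfolding f_def x_eq using sum_update_slot[of "{1..k}" l0 lam a y] l0 by simp
    moreover have "\<forall>l\<in>{1..k}. (a(l0 := y)) l \<in> (if l = i then slice else A)"
      using a l0 y unfolding C_def by auto
    ultimately show "f y \<in> mixed_sum" unfolding msum_dilate_mem by blast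
    have "n * n dvd lam l0 * (y - a l0)"
      using n_dvd_lam[of l0] l0 y unfolding C_def by (simp add: mult_dvd_mono mod_eq_dvd_iff[symmetric])
    then have "[x = f y] (mod n * n)" unfolding f_def by (simp add: cong_iff_dvd_diff)
    then show "f y \<notin> slice_sum" using x_off by blast
  qed
  have "inj_on f C" unfolding f_def inj_on_def using lam_nonzero l0 by auto
  moreover have "finite C" unfolding C_def using A_finite by simp
  ultimately have gain: "card slice_sum + card C \<le> card mixed_sum"
    using card_add_le_of_injection[OF mixed_sum_finite slice_sum_subset] f_new by blast
  define M where "M = {card {x \<in> A. x mod n = s} | s. 0 \<le> s \<and> s < n \<and> {x \<in> A. x mod n = s} \<noteq> {}}"
  have "card C \<in> M" unfolding M_def C_def using n_pos a_l0 by auto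
  moreover have "finite M" unfolding M_def
    by (rule finite_subset[of _ "(\<lambda>s. card {x \<in> A. x mod n = s}) ` {0..<n}"]) auto
  ultimately have "Min M \<le> card C" by simp
  with gain show ?thesis unfolding M_def by linarith
qed

end

theorem mainTheorem3:
  fixes k :: nat and lam :: "nat \<Rightarrow> int" and A :: "int set"
    and g :: "nat \<Rightarrow> int" and i :: nat and r :: int
  assumes "k \<ge> 2"
    and "\<forall>l\<in>{1..k}. lam l \<noteq> 0"
    and "Gcd (lam ` {1..k}) = 1"
    and g_def: "\<forall>l\<in>{1..k}. g l = Gcd (lam ` ({1..k} - {l}))"
    and "finite A" and "reduced A"
    and "i \<in> {1..k}"
    and "0 \<le> r" and "r < g i"
    and "{x \<in> A. x mod g i = r} \<noteq> {}"
  shows "fully_distributed ((\<lambda>x. (x - r) div g i) ` {x \<in> A. x mod g i = r}) (g i)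
      \<or> card (msum k (\<lambda>l. dilate (lam l) (if l = i then {x \<in> A. x mod g i = r} else A)))
        \<ge> card (msum k (\<lambda>l. dilate (lam l) {x \<in> A. x mod g i = r}))
          + Min {card {x \<in> A. x mod g i = s} | s. 0 \<le> s \<and> s < g i \<and> {x \<in> A. x mod g i = s} \<noteq> {}}"
proof -
  have g_i: "g i = Gcd (lam ` ({1..k} - {i}))" using g_def \<open>i \<in> {1..k}\<close> by blast
  have g_pos: "g i > 0" using \<open>0 \<le> r\<close> \<open>r < g i\<close> by linarith
  note setting = \<open>i \<in> {1..k}\<close> g_i g_pos \<open>finite A\<close>
  show ?thesis
  proof (cases "covered_mod (mixed_sum k lam A i (g i) r) (slice_sum k lam A (g i) r) (g i * g i)")
    case True
    have "coprime (lam i) (g i)"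
      unfolding g_i by (rule coprime_Gcd_others[OF \<open>Gcd (lam ` {1..k}) = 1\<close> \<open>i \<in> {1..k}\<close>])
    with True show ?thesis
      using fully_distributed_if_covered[OF setting] \<open>reduced A\<close> \<open>{x \<in> A. x mod g i = r} \<noteq> {}\<close>
      by blast
  next
    case False
    then show ?thesis
      using card_gain_if_not_covered[OF setting] \<open>k \<ge> 2\<close> \<open>\<forall>l\<in>{1..k}. lam l \<noteq> 0\<close> by blast
  qed
qed

end
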